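(* Let $\Gamma$ be a non-trivial finite group and let $G=\Gamma^\omega$, the countable product of copies of $\Gamma$, equipped with the product topology (each factor discrete) and its normalized Haar measure. Then $G$ has $2^{\mathfrak c}$ distinct dense subgroups that are not Haar measurable, where $\mathfrak c=2^{\aleph_0}$.
   Context: Haar measurability refers to the completed normalized Haar measure on the compact group $G$. *)

theory Defs
  imports "HOL-Probability.Probability" "HOL-Algebra.Product_Groups" "HOL-Library.Equipollence"
begin

definition omega_power :: "('a, 'b) monoid_scheme \<Rightarrow> (nat \<Rightarrow> 'a) monoid" where
  "omega_power \<Gamma> = product_group (UNIV :: nat set) (\<lambda>_. \<Gamma>)"

definition omega_power_topology :: "('a, 'b) monoid_scheme \<Rightarrow> (nat \<Rightarrow> 'a) topology" where
  "omega_power_topology \<Gamma> =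
     product_topology (\<lambda>_. discrete_topology (carrier \<Gamma>)) (UNIV :: nat set)"

text \<open>Normalized Haar measure on the compact group Gamma^omega: the infinite product of
  the normalized counting (uniform) measures on the finite factors, and its completion.\<close>
definition omega_power_haar :: "('a, 'b) monoid_scheme \<Rightarrow> (nat \<Rightarrow> 'a) measure" where
  "omega_power_haar \<Gamma> =
     PiM (UNIV :: nat set) (\<lambda>_. uniform_count_measure (carrier \<Gamma>))"

definition haar_measurable :: "('a, 'b) monoid_scheme \<Rightarrow> (nat \<Rightarrow> 'a) set \<Rightarrow> bool" where
  "haar_measurable \<Gamma> S \<longleftrightarrow> S \<in> sets (completion (omega_power_haar \<Gamma>))"

end

theory Submission
  imports Defs
begin

text \<open>For a free ultrafilter \<open>U\<close> on \<open>\<nat>\<close>, the elements of \<open>\<Gamma>\<^sup>\<omega>\<close> that equal \<open>\<one>\<close> on a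
  \<open>U\<close>-large set of coordinates form a subgroup \<open>N\<^sub>U\<close>; it contains every finitely supported
  element, so it is dense. If \<open>N\<^sub>U\<close> were Haar measurable, a measurable kernel of it would be
  invariant modulo null sets under finitely supported translations. Such a set meets all
  cylinders over a fixed finite set of coordinates in equal measure, hence is independent of
  every measurable set and has measure \<open>0\<close> or \<open>1\<close>. Measure \<open>0\<close> is impossible because the
  finitely many translates of \<open>N\<^sub>U\<close> by constant sequences cover \<open>\<Gamma>\<^sup>\<omega>\<close>, and measure \<open>1\<close>
  because the translate by a constant sequence \<open>g \<noteq> \<one>\<close> is disjoint from \<open>N\<^sub>U\<close>. Distinct
  ultrafilters give distinct subgroups, and Hausdorff's independent family of \<open>\<cc>\<close> subsets of
  \<open>\<nat>\<close> yields \<open>2\<^sup>\<cc>\<close> free ultrafilters.\<close>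

section \<open>Free ultrafilters\<close>

definition fip :: "'a set set \<Rightarrow> bool" where
  "fip V \<longleftrightarrow> (\<forall>F. finite F \<longrightarrow> F \<subseteq> V \<longrightarrow> \<Inter>F \<noteq> {})"

definition free_ultrafilter :: "'a set set \<Rightarrow> bool" where
  "free_ultrafilter U \<longleftrightarrow> fip U \<and> (\<forall>A. A \<in> U \<or> - A \<in> U) \<and> (\<forall>A. finite A \<longrightarrow> - A \<in> U)"

lemma fipD: "fip V \<Longrightarrow> finite F \<Longrightarrow> F \<subseteq> V \<Longrightarrow> \<Inter>F \<noteq> {}"
  unfolding fip_def by blast

lemma free_ultrafilter_fip: "free_ultrafilter U \<Longrightarrow> finite F \<Longrightarrow> F \<subseteq> U \<Longrightarrow> \<Inter>F \<noteq> {}"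
  unfolding free_ultrafilter_def fip_def by blast

lemma free_ultrafilter_compl: "free_ultrafilter U \<Longrightarrow> A \<notin> U \<Longrightarrow> - A \<in> U"
  unfolding free_ultrafilter_def by blast

lemma free_ultrafilter_compl_not_mem: "free_ultrafilter U \<Longrightarrow> A \<in> U \<Longrightarrow> - A \<notin> U"
proof
  assume "free_ultrafilter U" "A \<in> U" "- A \<in> U"
  then have "\<Inter>{A, - A} \<noteq> {}" by (intro free_ultrafilter_fip) auto
  then show False by simp
qed

lemma free_ultrafilter_cofinite: "free_ultrafilter U \<Longrightarrow> finite (- A) \<Longrightarrow> A \<in> U"
  unfolding free_ultrafilter_def by (metis double_complement)

lemma free_ultrafilter_Int:
  assumes "free_ultrafilter U" "A \<in> U" "B \<in> U"
  shows "A \<inter> B \<in> U"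
proof (rule ccontr)
  assume "A \<inter> B \<notin> U"
  then have "{A, B, - (A \<inter> B)} \<subseteq> U" using assms free_ultrafilter_compl by blast
  from free_ultrafilter_fip[OF assms(1) _ this] show False by auto
qed

lemma free_ultrafilter_mono:
  assumes "free_ultrafilter U" "A \<in> U" "A \<subseteq> B"
  shows "B \<in> U"
proof (rule ccontr)
  assume "B \<notin> U"
  then have "{A, - B} \<subseteq> U" using assms free_ultrafilter_compl by blast
  from free_ultrafilter_fip[OF assms(1) _ this] show False using assms(3) by auto
qed

lemma free_ultrafilter_finite_UN:
  assumes U: "free_ultrafilter U" and I: "finite I" and UN: "(\<Union>i\<in>I. P i) \<in> U"
  shows "\<exists>i\<in>I. P i \<in> U"
proof (rule ccontr)
  assume "\<not> ?thesis"
  then have sub: "insert (\<Union>i\<in>I. P i) ((\<lambda>i. - P i) ` I) \<subseteq> U"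
    using U UN free_ultrafilter_compl by blast
  have "finite (insert (\<Union>i\<in>I. P i) ((\<lambda>i. - P i) ` I))" using I by simp
  from free_ultrafilter_fip[OF U this sub] show False by blast
qed

lemma fip_maximal_extension:
  assumes "fip B"
  obtains U where "B \<subseteq> U" "fip U" "\<And>V. fip V \<Longrightarrow> U \<subseteq> V \<Longrightarrow> V = U"
proof -
  define \<AA> where "\<AA> = {V. B \<subseteq> V \<and> fip V}"
  have "\<exists>U\<in>\<AA>. \<forall>V\<in>\<AA>. U \<subseteq> V \<longrightarrow> V = U"
  proof (rule Zorn_Lemma2, intro ballI)
    fix \<C> assume C: "\<C> \<in> chains \<AA>"
    show "\<exists>U\<in>\<AA>. \<forall>V\<in>\<C>. V \<subseteq> U"
    proof (cases "\<C> = {}")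
      case True
      then show ?thesis using assms unfolding \<AA>_def by (intro bexI[of _ B]) auto
    next
      case False
      have "fip (\<Union>\<C>)"
        unfolding fip_def
      proof (intro allI impI)
        fix F assume F: "finite F" "F \<subseteq> \<Union>\<C>"
        have "subset.chain UNIV \<C>"
          using C unfolding chains_def chain_subset_alt_def by auto
        then obtain V where "V \<in> \<C>" "F \<subseteq> V"
          using finite_subset_Union_chain[OF F False] by blast
        moreover have "fip V" using C \<open>V \<in> \<C>\<close> unfolding chains_def \<AA>_def by blast
        ultimately show "\<Inter>F \<noteq> {}" using F(1) unfolding fip_def by blast
      qed
      moreover have "B \<subseteq> \<Union>\<C>" using C False unfolding chains_def \<AA>_def by auto
      ultimately show ?thesis unfolding \<AA>_def by (intro bexI[of _ "\<Union>\<C>"]) auto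
    qed
  qed
  then obtain U where U: "U \<in> \<AA>" and max: "\<And>V. V \<in> \<AA> \<Longrightarrow> U \<subseteq> V \<Longrightarrow> V = U"
    by blast
  show ?thesis
  proof (rule that)
    show "B \<subseteq> U" "fip U" using U unfolding \<AA>_def by auto
    show "V = U" if "fip V" "U \<subseteq> V" for V
      using max[of V] that \<open>B \<subseteq> U\<close> unfolding \<AA>_def by blast
  qed
qed

lemma maximal_fip_dichotomy:
  assumes fip: "fip U" and max: "\<And>V. fip V \<Longrightarrow> U \<subseteq> V \<Longrightarrow> V = U"
  shows "A \<in> U \<or> - A \<in> U"
proof (cases "A \<in> U")
  case False
  have "\<not> fip (insert A U)"
  proof
    assume "fip (insert A U)"
    then have "insert A U = U" by (rule max) blast
    with False show False by blast
  qed
  then obtain F0 where F0: "finite F0" "F0 \<subseteq> insert A U" "\<Inter>F0 = {}"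
    unfolding fip_def by blast
  define F where "F = F0 - {A}"
  have "A \<inter> \<Inter>F \<subseteq> \<Inter>F0" unfolding F_def by blast
  then have F: "finite F" "F \<subseteq> U" "A \<inter> \<Inter>F = {}"
    using F0 unfolding F_def by auto
  have "fip (insert (- A) U)"
    unfolding fip_def
  proof (intro allI impI)
    fix F' assume F': "finite F'" "F' \<subseteq> insert (- A) U"
    let ?G = "F \<union> (F' - {- A})"
    have "finite ?G" using F(1) F'(1) by simp
    moreover have "?G \<subseteq> U" using F(2) F'(2) by blast
    ultimately have "\<Inter>?G \<noteq> {}" by (rule fipD[OF fip])
    moreover have "\<Inter>?G \<subseteq> \<Inter>F'"
    proof
      fix x assume x: "x \<in> \<Inter>?G"
      then have "x \<notin> A" using F(3) by blast
      with x show "x \<in> \<Inter>F'" by blast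
    qed
    ultimately show "\<Inter>F' \<noteq> {}" by auto
  qed
  then have "insert (- A) U = U" by (rule max) blast
  then show ?thesis by blast
qed simp

lemma fip_with_cofinite:
  assumes "\<And>F. finite F \<Longrightarrow> F \<subseteq> B \<Longrightarrow> infinite (\<Inter>F)"
  shows "fip (B \<union> {- A | A. finite A})"
  unfolding fip_def
proof (intro allI impI)
  fix F assume F: "finite F" "F \<subseteq> B \<union> {- A | A. finite A}"
  have "finite (- X)" if "X \<in> F - B" for X
  proof -
    from that F(2) obtain A where "X = - A" "finite A" by blast
    then show ?thesis by simp
  qed
  then have "finite (\<Union>X\<in>F - B. - X)" using F(1) by blast
  moreover have "infinite (\<Inter>(F \<inter> B))" using F(1) by (intro assms) auto
  ultimately have "infinite (\<Inter>(F \<inter> B) - (\<Union>X\<in>F - B. - X))" by (rule Diff_infinite_finite)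
  moreover have "\<Inter>(F \<inter> B) - (\<Union>X\<in>F - B. - X) \<subseteq> \<Inter>F" by blast
  ultimately have "infinite (\<Inter>F)" by (rule infinite_super[rotated])
  then show "\<Inter>F \<noteq> {}" by auto
qed

lemma free_ultrafilter_extension:
  assumes "\<And>F. finite F \<Longrightarrow> F \<subseteq> B \<Longrightarrow> infinite (\<Inter>F)"
  obtains U where "free_ultrafilter U" "B \<subseteq> U"
proof -
  obtain U where U: "B \<union> {- A | A. finite A} \<subseteq> U" "fip U" "\<And>V. fip V \<Longrightarrow> U \<subseteq> V \<Longrightarrow> V = U"
    using fip_maximal_extension[OF fip_with_cofinite[OF assms]] by blast
  have "free_ultrafilter U"
    unfolding free_ultrafilter_def
  proof (intro conjI allI impI)
    show "fip U" by (rule U(2))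
    show "A \<in> U \<or> - A \<in> U" for A by (rule maximal_fip_dichotomy[OF U(2,3)])
    show "- A \<in> U" if "finite A" for A using that U(1) by blast
  qed
  with U(1) show ?thesis by (intro that) auto
qed

section \<open>Hausdorff's independent family\<close>

text \<open>The code \<open>(n, \<A>)\<close> is the condition that the trace of a set on \<open>{..<n}\<close> lies in \<open>\<A>\<close>;
  \<open>hausdorff_set Y\<close> indexes the conditions met by \<open>Y\<close>.\<close>

definition hausdorff_codes :: "(nat \<times> nat set set) set" where
  "hausdorff_codes = {(n, \<A>). \<A> \<subseteq> Pow {..<n}}"

lemma countable_hausdorff_codes: "countable hausdorff_codes"
proof -
  have "hausdorff_codes = (\<Union>n. Pair n ` Pow (Pow {..<n}))"
    unfolding hausdorff_codes_def by auto
  moreover have "countable (Pair n ` Pow (Pow {..<n}))" for n :: nat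
    by (intro countable_finite finite_imageI) simp
  ultimately show ?thesis using countable_UN[of UNIV "\<lambda>n::nat. Pair n ` Pow (Pow {..<n})"] by simp
qed

lemma infinite_hausdorff_codes: "infinite hausdorff_codes"
proof
  assume "finite hausdorff_codes"
  moreover have "range (\<lambda>n. (n, {})) \<subseteq> hausdorff_codes"
    unfolding hausdorff_codes_def by auto
  ultimately have "finite (range (\<lambda>n::nat. (n, {} :: nat set set)))"
    by (rule finite_subset[rotated])
  then show False by (simp add: finite_image_iff inj_on_def)
qed

definition hausdorff_code :: "nat \<Rightarrow> nat \<times> nat set set" where
  "hausdorff_code = from_nat_into hausdorff_codes"

lemma hausdorff_code_surj: "c \<in> hausdorff_codes \<Longrightarrow> \<exists>k. hausdorff_code k = c"
  using bij_betw_from_nat_into[OF countable_hausdorff_codes infinite_hausdorff_codes]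
  unfolding hausdorff_code_def bij_betw_def by (metis UNIV_I image_iff)

definition hausdorff_set :: "nat set \<Rightarrow> nat set" where
  "hausdorff_set Y = {k. Y \<inter> {..<fst (hausdorff_code k)} \<in> snd (hausdorff_code k)}"

lemma finite_disjoint_families_separated:
  fixes P Q :: "nat set set"
  assumes "finite P" "finite Q" "P \<inter> Q = {}"
  obtains m where "\<And>n Y Z. m \<le> n \<Longrightarrow> Y \<in> P \<Longrightarrow> Z \<in> Q \<Longrightarrow> Y \<inter> {..<n} \<noteq> Z \<inter> {..<n}"
proof -
  have "\<exists>w. (w \<in> Y) \<noteq> (w \<in> Z)" if "Y \<in> P" "Z \<in> Q" for Y Z
  proof -
    have "Y \<noteq> Z" using that assms(3) by blast
    then show ?thesis by blast
  qed
  then obtain w where w: "\<And>Y Z. Y \<in> P \<Longrightarrow> Z \<in> Q \<Longrightarrow> (w Y Z \<in> Y) \<noteq> (w Y Z \<in> Z)"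
    by metis
  define m where "m = Suc (Max (insert 0 (case_prod w ` (P \<times> Q))))"
  have bound: "w Y Z < m" if "Y \<in> P" "Z \<in> Q" for Y Z
  proof -
    have "w Y Z \<in> insert 0 (case_prod w ` (P \<times> Q))"
      using that by (intro insertI2 image_eqI[of _ _ "(Y, Z)"]) auto
    then have "w Y Z \<le> Max (insert 0 (case_prod w ` (P \<times> Q)))"
      using assms(1,2) by (intro Max_ge) auto
    then show ?thesis unfolding m_def by simp
  qed
  show ?thesis
  proof (rule that)
    fix n Y Z assume n: "m \<le> n" and YZ: "Y \<in> P" "Z \<in> Q"
    have "w Y Z < n" using bound[OF YZ] n by simp
    then have "(w Y Z \<in> Y \<inter> {..<n}) \<noteq> (w Y Z \<in> Z \<inter> {..<n})" using w[OF YZ] by simp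
    then show "Y \<inter> {..<n} \<noteq> Z \<inter> {..<n}" by auto
  qed
qed

lemma hausdorff_set_independent:
  assumes "finite P" "finite Q" "P \<inter> Q = {}"
  shows "infinite {k. (\<forall>Y\<in>P. k \<in> hausdorff_set Y) \<and> (\<forall>Z\<in>Q. k \<notin> hausdorff_set Z)}"
proof -
  obtain m where separated: "\<And>n Y Z. m \<le> n \<Longrightarrow> Y \<in> P \<Longrightarrow> Z \<in> Q \<Longrightarrow> Y \<inter> {..<n} \<noteq> Z \<inter> {..<n}"
    using finite_disjoint_families_separated[OF assms] by blast
  have "\<exists>k. hausdorff_code k = (n, (\<lambda>Y. Y \<inter> {..<n}) ` P)" for n
    by (rule hausdorff_code_surj) (auto simp: hausdorff_codes_def)
  then obtain code where code: "\<And>n. hausdorff_code (code n) = (n, (\<lambda>Y. Y \<inter> {..<n}) ` P)"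
    by metis
  have "n = fst (hausdorff_code (code n))" for n by (simp add: code)
  then have "inj code" by (metis injI)
  then have "infinite (code ` {m..})"
    using infinite_Ici[of m] by (metis finite_imageD inj_on_subset subset_UNIV)
  moreover have "code ` {m..} \<subseteq> {k. (\<forall>Y\<in>P. k \<in> hausdorff_set Y) \<and> (\<forall>Z\<in>Q. k \<notin> hausdorff_set Z)}"
  proof
    fix k assume "k \<in> code ` {m..}"
    then obtain n where n: "m \<le> n" "k = code n" by auto
    have "k \<in> hausdorff_set Y" if "Y \<in> P" for Y
      using imageI[OF that, of "\<lambda>Y. Y \<inter> {..<n}"] by (simp add: hausdorff_set_def code n(2))
    moreover have "k \<notin> hausdorff_set Z" if "Z \<in> Q" for Z
    proof -
      have "Z \<inter> {..<n} \<notin> (\<lambda>Y. Y \<inter> {..<n}) ` P"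
      proof
        assume "Z \<inter> {..<n} \<in> (\<lambda>Y. Y \<inter> {..<n}) ` P"
        then obtain Y where "Y \<in> P" "Z \<inter> {..<n} = Y \<inter> {..<n}" by blast
        with separated[OF n(1) this(1) that] show False by simp
      qed
      then show ?thesis by (simp add: hausdorff_set_def code n(2))
    qed
    ultimately show "k \<in> {k. (\<forall>Y\<in>P. k \<in> hausdorff_set Y) \<and> (\<forall>Z\<in>Q. k \<notin> hausdorff_set Z)}"
      by blast
  qed
  ultimately show ?thesis by (rule infinite_super[rotated])
qed

lemma hausdorff_literals_infinite_Inter:
  assumes F: "finite F" "F \<subseteq> hausdorff_set ` S \<union> (\<lambda>Y. - hausdorff_set Y) ` (- S)"
  shows "infinite (\<Inter>F)"
proof -
  obtain P where P: "P \<subseteq> S" "finite P" "F \<inter> hausdorff_set ` S = hausdorff_set ` P"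
    using finite_subset_image[of "F \<inter> hausdorff_set ` S" hausdorff_set S] F(1) by auto
  obtain Q where Q: "Q \<subseteq> - S" "finite Q"
    "F \<inter> (\<lambda>Y. - hausdorff_set Y) ` (- S) = (\<lambda>Y. - hausdorff_set Y) ` Q"
    using finite_subset_image[of "F \<inter> (\<lambda>Y. - hausdorff_set Y) ` (- S)" "\<lambda>Y. - hausdorff_set Y" "- S"]
      F(1) by auto
  have "{k. (\<forall>Y\<in>P. k \<in> hausdorff_set Y) \<and> (\<forall>Z\<in>Q. k \<notin> hausdorff_set Z)} \<subseteq> \<Inter>F"
  proof (intro subsetI InterI)
    fix k X
    assume k: "k \<in> {k. (\<forall>Y\<in>P. k \<in> hausdorff_set Y) \<and> (\<forall>Z\<in>Q. k \<notin> hausdorff_set Z)}"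
      and X: "X \<in> F"
    then have "X \<in> F \<inter> hausdorff_set ` S \<or> X \<in> F \<inter> (\<lambda>Y. - hausdorff_set Y) ` (- S)"
      using F(2) by blast
    then have "X \<in> hausdorff_set ` P \<or> X \<in> (\<lambda>Y. - hausdorff_set Y) ` Q"
      using P(3) Q(3) by simp
    then show "k \<in> X" using k by auto
  qed
  moreover have "P \<inter> Q = {}" using P(1) Q(1) by auto
  ultimately show ?thesis
    using hausdorff_set_independent[OF P(2) Q(2)] infinite_super by blast
qed

lemma Pow_nat_sets_lepoll_free_ultrafilters:
  "Pow (UNIV :: nat set set) \<lesssim> {U :: nat set set. free_ultrafilter U}"
proof -
  let ?lits = "\<lambda>S. hausdorff_set ` S \<union> (\<lambda>Y. - hausdorff_set Y) ` (- S)"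
  have "\<exists>U. free_ultrafilter U \<and> ?lits S \<subseteq> U" for S
    by (rule free_ultrafilter_extension[OF hausdorff_literals_infinite_Inter]) blast+
  then obtain ult where ult: "\<And>S. free_ultrafilter (ult S)" "\<And>S. ?lits S \<subseteq> ult S"
    by metis
  have ult_neq: "ult T \<noteq> ult T'" if "Y \<in> T" "Y \<notin> T'" for Y T T'
  proof
    assume eq: "ult T = ult T'"
    have "hausdorff_set Y \<in> ult T" by (rule subsetD[OF ult(2)]) (use that in auto)
    moreover have "- hausdorff_set Y \<in> ult T'" by (rule subsetD[OF ult(2)]) (use that in auto)
    ultimately show False using free_ultrafilter_compl_not_mem[OF ult(1)] eq by simp
  qed
  have "inj ult"
  proof (rule injI)
    fix S S' assume "ult S = ult S'"
    then show "S = S'" using ult_neq by (metis subset_antisym subsetI)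
  qed
  show ?thesis
    unfolding lepoll_def
  proof (intro exI conjI)
    show "inj_on ult (Pow UNIV)" using \<open>inj ult\<close> by (rule inj_on_subset) simp
    show "ult ` Pow UNIV \<subseteq> {U. free_ultrafilter U}" using ult(1) by blast
  qed
qed

lemma (in group) card_left_translate_preimage:
  assumes h: "h \<in> carrier G" and A: "A \<subseteq> carrier G"
  shows "card {c \<in> carrier G. h \<otimes> c \<in> A} = card A"
proof -
  have "bij_betw (\<lambda>c. h \<otimes> c) {c \<in> carrier G. h \<otimes> c \<in> A} A"
  proof (rule bij_betw_imageI)
    show "inj_on (\<lambda>c. h \<otimes> c) {c \<in> carrier G. h \<otimes> c \<in> A}" using h by (auto intro: inj_onI)
    have "a \<in> (\<lambda>c. h \<otimes> c) ` {c \<in> carrier G. h \<otimes> c \<in> A}" if "a \<in> A" for a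
      using that h A by (intro image_eqI[of _ _ "inv h \<otimes> a"]) (auto simp: m_assoc[symmetric])
    then show "(\<lambda>c. h \<otimes> c) ` {c \<in> carrier G. h \<otimes> c \<in> A} = A" by auto
  qed
  then show ?thesis by (rule bij_betw_same_card)
qed

locale finite_group = group G for G (structure) +
  assumes finite_carrier: "finite (carrier G)"
begin

lemma carrier_omega_power: "carrier (omega_power G) = {x. \<forall>i. x i \<in> carrier G}"
  unfolding omega_power_def by (auto simp: PiE_def extensional_def)

definition ultra_subgroup :: "nat set set \<Rightarrow> (nat \<Rightarrow> 'a) set" where
  "ultra_subgroup U = {x. (\<forall>i. x i \<in> carrier G) \<and> {i. x i = \<one>} \<in> U}"

lemma ultra_subgroup_subgroup:
  assumes U: "free_ultrafilter U"
  shows "subgroup (ultra_subgroup U) (omega_power G)"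
proof
  show "ultra_subgroup U \<subseteq> carrier (omega_power G)"
    unfolding ultra_subgroup_def carrier_omega_power by auto
next
  fix x y assume x: "x \<in> ultra_subgroup U" and y: "y \<in> ultra_subgroup U"
  have "{i. x i = \<one>} \<inter> {i. y i = \<one>} \<in> U"
    using x y U free_ultrafilter_Int unfolding ultra_subgroup_def by auto
  moreover have "{i. x i = \<one>} \<inter> {i. y i = \<one>} \<subseteq> {i. x i \<otimes> y i = \<one>}" by auto
  ultimately have "{i. x i \<otimes> y i = \<one>} \<in> U" using U free_ultrafilter_mono by blast
  then show "x \<otimes>\<^bsub>omega_power G\<^esub> y \<in> ultra_subgroup U"
    using x y unfolding ultra_subgroup_def omega_power_def by auto
next
  show "\<one>\<^bsub>omega_power G\<^esub> \<in> ultra_subgroup U"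
    using free_ultrafilter_cofinite[OF U, of UNIV]
    unfolding ultra_subgroup_def omega_power_def by auto
next
  fix x assume x: "x \<in> ultra_subgroup U"
  then have "x \<in> carrier (omega_power G)" unfolding ultra_subgroup_def carrier_omega_power by auto
  then have "inv\<^bsub>omega_power G\<^esub> x = (\<lambda>i. inv (x i))"
    unfolding omega_power_def by (subst inv_product_group) (auto intro: is_group)
  moreover have "{i. inv (x i) = \<one>} = {i. x i = \<one>}"
    using x unfolding ultra_subgroup_def by (auto simp: inv_eq_1_iff)
  ultimately show "inv\<^bsub>omega_power G\<^esub> x \<in> ultra_subgroup U"
    using x unfolding ultra_subgroup_def by auto
qed

lemma ultra_subgroup_finite_change:
  assumes U: "free_ultrafilter U" and x: "x \<in> ultra_subgroup U"
    and y: "\<forall>i. y i \<in> carrier G" and fin: "finite {i. y i \<noteq> x i}"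
  shows "y \<in> ultra_subgroup U"
proof -
  have "{i. x i = \<one>} \<in> U" using x unfolding ultra_subgroup_def by simp
  moreover have "- {i. y i \<noteq> x i} \<in> U" using fin by (intro free_ultrafilter_cofinite[OF U]) simp
  ultimately have "{i. x i = \<one>} \<inter> - {i. y i \<noteq> x i} \<in> U" by (rule free_ultrafilter_Int[OF U])
  moreover have "{i. x i = \<one>} \<inter> - {i. y i \<noteq> x i} \<subseteq> {i. y i = \<one>}" by auto
  ultimately show ?thesis using U free_ultrafilter_mono y unfolding ultra_subgroup_def by blast
qed

lemma ultra_subgroup_dense:
  assumes U: "free_ultrafilter U"
  shows "omega_power_topology G closure_of ultra_subgroup U = topspace (omega_power_topology G)"
  unfolding dense_intersects_open
proof (intro allI impI)
  fix T assume T: "openin (omega_power_topology G) T \<and> T \<noteq> {}"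
  then obtain x where x: "x \<in> T" by auto
  have "\<exists>V. finite {i. V i \<noteq> carrier G} \<and> (\<forall>i. V i \<subseteq> carrier G) \<and>
      x \<in> PiE UNIV V \<and> PiE UNIV V \<subseteq> T"
    using T x unfolding omega_power_topology_def openin_product_topology_alt by simp
  then obtain V where V: "finite {i. V i \<noteq> carrier G}" "\<forall>i. V i \<subseteq> carrier G"
    "x \<in> PiE UNIV V" "PiE UNIV V \<subseteq> T"
    by blast
  define y where "y i = (if V i \<noteq> carrier G then x i else \<one>)" for i
  have "y \<in> PiE UNIV V" using V(3) unfolding y_def by (auto simp: PiE_def)
  then have "y \<in> T" using V(4) by auto
  have "\<forall>i. y i \<in> carrier G" using V(2,3) unfolding y_def by (auto simp: PiE_def)
  moreover have "- {i. V i \<noteq> carrier G} \<in> U"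
    using free_ultrafilter_cofinite[OF U] V(1) by simp
  then have "{i. y i = \<one>} \<in> U" by (rule free_ultrafilter_mono[OF U]) (auto simp: y_def)
  ultimately have "y \<in> ultra_subgroup U" unfolding ultra_subgroup_def by auto
  with \<open>y \<in> T\<close> show "ultra_subgroup U \<inter> T \<noteq> {}" by auto
qed

lemma ultra_subgroup_inj:
  assumes "U \<noteq> V" and g: "g \<in> carrier G" "g \<noteq> \<one>"
  shows "ultra_subgroup U \<noteq> ultra_subgroup V"
proof -
  obtain A where A: "A \<in> U \<and> A \<notin> V \<or> A \<in> V \<and> A \<notin> U" using assms(1) by blast
  define x where "x i = (if i \<in> A then \<one> else g)" for i
  have "\<forall>i. x i \<in> carrier G" "{i. x i = \<one>} = A" using g unfolding x_def by auto
  then have "(x \<in> ultra_subgroup U) \<noteq> (x \<in> ultra_subgroup V)"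
    using A unfolding ultra_subgroup_def by auto
  then show ?thesis by auto
qed

abbreviation haar :: "(nat \<Rightarrow> 'a) measure" where
  "haar \<equiv> omega_power_haar G"

abbreviation factor :: "'a measure" where
  "factor \<equiv> uniform_count_measure (carrier G)"

lemma prob_space_factor: "prob_space factor"
  using finite_carrier one_closed by (intro prob_space_uniform_count_measure) auto

lemma space_haar: "space haar = {x. \<forall>i. x i \<in> carrier G}"
  by (auto simp: omega_power_haar_def space_PiM space_uniform_count_measure PiE_def extensional_def)

lemma prob_space_haar: "prob_space haar"
  unfolding omega_power_haar_def by (rule prob_space_PiM) (rule prob_space_factor)

definition translate :: "(nat \<Rightarrow> 'a) \<Rightarrow> (nat \<Rightarrow> 'a) \<Rightarrow> nat \<Rightarrow> 'a" where
  "translate h x = (\<lambda>i. h i \<otimes> x i)"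

lemma translate_in_space:
  "h \<in> space haar \<Longrightarrow> x \<in> space haar \<Longrightarrow> translate h x \<in> space haar"
  by (auto simp: space_haar translate_def)

lemma measurable_translate:
  assumes h: "h \<in> space haar"
  shows "translate h \<in> measurable haar haar"
proof -
  have "(\<lambda>x i. h i \<otimes> x i) \<in> measurable haar (PiM UNIV (\<lambda>_. factor))"
  proof (rule measurable_PiM_single')
    fix i :: nat
    have "(\<lambda>x. x i) \<in> measurable haar factor"
      unfolding omega_power_haar_def by (rule measurable_component_singleton) simp
    moreover have "(\<lambda>c. h i \<otimes> c) \<in> measurable factor factor"
      using h by (auto simp: measurable_def space_haar space_uniform_count_measure
          sets_uniform_count_measure)
    ultimately show "(\<lambda>x. h i \<otimes> x i) \<in> measurable haar factor"
      by (rule measurable_compose)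
  next
    show "(\<lambda>x i. h i \<otimes> x i) \<in> space haar \<rightarrow> PiE UNIV (\<lambda>i. space factor)"
      using h by (auto simp: space_haar space_uniform_count_measure)
  qed
  then show ?thesis unfolding translate_def omega_power_haar_def by simp
qed

lemma haar_translation_invariant:
  assumes h: "h \<in> space haar"
  shows "distr haar haar (translate h) = haar"
proof (rule measure_eqI_PiM_infinite[where I=UNIV and M="\<lambda>_. factor"])
  show "sets (distr haar haar (translate h)) = sets (PiM UNIV (\<lambda>_. factor))"
    "sets haar = sets (PiM UNIV (\<lambda>_. factor))"
    by (simp_all add: omega_power_haar_def)
  show "finite_measure (distr haar haar (translate h))"
    using prob_space.prob_space_distr[OF prob_space_haar measurable_translate[OF h]]
    by (simp add: prob_space_def)
next
  fix A :: "nat \<Rightarrow> 'a set" and J :: "nat set"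
  assume J: "finite J" "J \<subseteq> UNIV" and A: "\<And>i. i \<in> J \<Longrightarrow> A i \<in> sets factor"
  have AC: "A i \<subseteq> carrier G" if "i \<in> J" for i using A[OF that] by (simp add: sets_uniform_count_measure)
  let ?E = "prod_emb UNIV (\<lambda>_. factor) J (Pi\<^sub>E J A)"
  let ?B = "\<lambda>j. {c \<in> carrier G. h j \<otimes> c \<in> A j}"
  have "?E \<in> sets haar" unfolding omega_power_haar_def using J A by (intro sets_PiM_I) auto
  moreover have "translate h -` ?E \<inter> space haar = prod_emb UNIV (\<lambda>_. factor) J (Pi\<^sub>E J ?B)"
    using h by (auto simp: prod_emb_iff PiE_iff translate_def space_haar space_uniform_count_measure
        extensional_def)
  ultimately have "emeasure (distr haar haar (translate h)) ?E
      = emeasure haar (prod_emb UNIV (\<lambda>_. factor) J (Pi\<^sub>E J ?B))"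
    using measurable_translate[OF h] by (simp add: emeasure_distr)
  also have "\<dots> = (\<Prod>j\<in>J. emeasure factor (?B j))"
    unfolding omega_power_haar_def using J
    by (intro emeasure_PiM_emb prob_space_factor) (auto simp: sets_uniform_count_measure)
  also have "\<dots> = (\<Prod>j\<in>J. emeasure factor (A j))"
  proof (rule prod.cong[OF refl])
    fix j assume "j \<in> J"
    moreover have "h j \<in> carrier G" using h by (auto simp: space_haar)
    ultimately show "emeasure factor (?B j) = emeasure factor (A j)"
      using finite_carrier AC card_left_translate_preimage
      by (subst (1 2) emeasure_uniform_count_measure) auto
  qed
  also have "\<dots> = emeasure haar ?E"
    unfolding omega_power_haar_def using J A by (intro emeasure_PiM_emb[symmetric] prob_space_factor) auto
  finally show "emeasure (distr haar haar (translate h)) ?E = emeasure haar ?E" .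
qed

lemma translate_preimage_sets:
  "h \<in> space haar \<Longrightarrow> A \<in> sets haar \<Longrightarrow> translate h -` A \<inter> space haar \<in> sets haar"
  using measurable_translate by (rule measurable_sets)

lemma emeasure_translate_preimage:
  assumes h: "h \<in> space haar" and A: "A \<in> sets haar"
  shows "emeasure haar (translate h -` A \<inter> space haar) = emeasure haar A"
  using emeasure_distr[OF measurable_translate[OF h] A] haar_translation_invariant[OF h] by simp

lemma measure_translate_preimage:
  "h \<in> space haar \<Longrightarrow> A \<in> sets haar \<Longrightarrow> measure haar (translate h -` A \<inter> space haar) = measure haar A"
  using emeasure_translate_preimage by (simp add: measure_def)

section \<open>A zero-one law for almost invariant sets\<close>

definition cylinder :: "nat set \<Rightarrow> (nat \<Rightarrow> 'a) \<Rightarrow> (nat \<Rightarrow> 'a) set" where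
  "cylinder J w = {x \<in> space haar. \<forall>j\<in>J. x j = w j}"

lemma cylinder_sets:
  assumes J: "finite J" and w: "\<And>j. j \<in> J \<Longrightarrow> w j \<in> carrier G"
  shows "cylinder J w \<in> sets haar"
proof -
  have "cylinder J w = prod_emb UNIV (\<lambda>_. factor) J (Pi\<^sub>E J (\<lambda>j. {w j}))"
    unfolding cylinder_def prod_emb_def omega_power_haar_def space_PiM by (auto simp: PiE_iff)
  also have "\<dots> \<in> sets haar"
    unfolding omega_power_haar_def using J w
    by (intro sets_PiM_I) (auto simp: sets_uniform_count_measure)
  finally show ?thesis .
qed

lemma prod_emb_eq_UN_cylinder:
  "prod_emb UNIV (\<lambda>_. factor) J (Pi\<^sub>E J X) = (\<Union>v\<in>Pi\<^sub>E J X. cylinder J v)"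
proof (intro equalityI subsetI)
  fix x assume "x \<in> prod_emb UNIV (\<lambda>_. factor) J (Pi\<^sub>E J X)"
  then have "x \<in> space haar" "restrict x J \<in> Pi\<^sub>E J X"
    by (auto simp: prod_emb_def omega_power_haar_def space_PiM)
  then show "x \<in> (\<Union>v\<in>Pi\<^sub>E J X. cylinder J v)"
    by (intro UN_I[of "restrict x J"]) (auto simp: cylinder_def)
next
  fix x assume "x \<in> (\<Union>v\<in>Pi\<^sub>E J X. cylinder J v)"
  then obtain v where v: "v \<in> Pi\<^sub>E J X" "x \<in> cylinder J v" by auto
  then have "restrict x J \<in> Pi\<^sub>E J X" unfolding cylinder_def by (auto simp: PiE_iff)
  then show "x \<in> prod_emb UNIV (\<lambda>_. factor) J (Pi\<^sub>E J X)"
    using v unfolding prod_emb_def cylinder_def omega_power_haar_def space_PiM by auto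
qed

definition almost_invariant :: "(nat \<Rightarrow> 'a) set \<Rightarrow> bool" where
  "almost_invariant W \<longleftrightarrow> W \<in> sets haar \<and>
     (\<forall>d\<in>space haar. finite {i. d i \<noteq> \<one>} \<longrightarrow> (AE x in haar. x \<in> W \<longleftrightarrow> translate d x \<in> W))"

lemma almost_invariant_space: "almost_invariant (space haar)"
  unfolding almost_invariant_def by (auto simp: translate_in_space)

lemma almost_invariant_Int_cylinder_eq:
  assumes W: "almost_invariant W" and J: "finite J"
    and w: "\<And>j. j \<in> J \<Longrightarrow> w j \<in> carrier G" and w': "\<And>j. j \<in> J \<Longrightarrow> w' j \<in> carrier G"
  shows "measure haar (W \<inter> cylinder J w) = measure haar (W \<inter> cylinder J w')"
proof -
  define d where "d i = (if i \<in> J then w' i \<otimes> inv (w i) else \<one>)" for i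
  have d: "d \<in> space haar" using w w' unfolding d_def space_haar by auto
  have "finite {i. d i \<noteq> \<one>}" using J by (rule finite_subset[rotated]) (auto simp: d_def)
  then have ae: "AE x in haar. x \<in> W \<longleftrightarrow> translate d x \<in> W"
    using W d unfolding almost_invariant_def by auto
  have Ws: "W \<in> sets haar" using W unfolding almost_invariant_def by auto
  have "(d j \<otimes> x j = w' j) = (x j = w j)" if "x \<in> space haar" "j \<in> J" for x j
    using that w w' unfolding d_def space_haar by (auto simp: m_assoc inv_solve_left')
  then have "translate d -` (W \<inter> cylinder J w') \<inter> space haar
      = (translate d -` W \<inter> space haar) \<inter> cylinder J w"
    using translate_in_space[OF d] unfolding cylinder_def by (auto simp: translate_def)
  then have "measure haar (W \<inter> cylinder J w') = measure haar ((translate d -` W \<inter> space haar) \<inter> cylinder J w)"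
    using measure_translate_preimage[OF d, of "W \<inter> cylinder J w'"] Ws cylinder_sets[OF J w'] by auto
  also have "\<dots> = measure haar (W \<inter> cylinder J w)"
  proof (rule measure_eq_AE)
    show "AE x in haar. x \<in> (translate d -` W \<inter> space haar) \<inter> cylinder J w \<longleftrightarrow> x \<in> W \<inter> cylinder J w"
      using ae by (rule AE_mp) (auto simp: cylinder_def)
    show "(translate d -` W \<inter> space haar) \<inter> cylinder J w \<in> sets haar" "W \<inter> cylinder J w \<in> sets haar"
      using Ws cylinder_sets[OF J w] translate_preimage_sets[OF d Ws] by (simp_all add: sets.Int)
  qed
  finally show ?thesis by simp
qed

lemma almost_invariant_Int_prod_emb_card:
  assumes W: "almost_invariant W" and J: "finite J" and X: "\<And>j. j \<in> J \<Longrightarrow> X j \<subseteq> carrier G"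
  shows "measure haar (W \<inter> prod_emb UNIV (\<lambda>_. factor) J (Pi\<^sub>E J X))
    = real (card (Pi\<^sub>E J X)) * measure haar (W \<inter> cylinder J (\<lambda>_. \<one>))"
proof -
  interpret prob_space haar by (rule prob_space_haar)
  have Ws: "W \<in> sets haar" using W unfolding almost_invariant_def by auto
  have fin: "finite (Pi\<^sub>E J X)"
    using J X finite_carrier by (intro finite_PiE) (auto intro: finite_subset)
  have "disjoint_family_on (\<lambda>v. W \<inter> cylinder J v) (Pi\<^sub>E J X)"
    unfolding disjoint_family_on_def
  proof (intro ballI impI)
    fix v v' assume "v \<in> Pi\<^sub>E J X" "v' \<in> Pi\<^sub>E J X" "v \<noteq> v'"
    then obtain j where "j \<in> J" "v j \<noteq> v' j" using PiE_ext by blast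
    then show "(W \<inter> cylinder J v) \<inter> (W \<inter> cylinder J v') = {}" unfolding cylinder_def by auto
  qed
  moreover have "W \<inter> cylinder J v \<in> sets haar" if "v \<in> Pi\<^sub>E J X" for v
    by (rule sets.Int[OF Ws cylinder_sets[OF J]]) (use that X in \<open>auto simp: PiE_iff\<close>)
  moreover have "W \<inter> prod_emb UNIV (\<lambda>_. factor) J (Pi\<^sub>E J X) = (\<Union>v\<in>Pi\<^sub>E J X. W \<inter> cylinder J v)"
    unfolding prod_emb_eq_UN_cylinder by blast
  ultimately have "measure haar (W \<inter> prod_emb UNIV (\<lambda>_. factor) J (Pi\<^sub>E J X))
      = (\<Sum>v\<in>Pi\<^sub>E J X. measure haar (W \<inter> cylinder J v))"
    by (simp only:) (intro finite_measure_finite_Union[OF fin]; blast)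
  also have "\<dots> = (\<Sum>v\<in>Pi\<^sub>E J X. measure haar (W \<inter> cylinder J (\<lambda>_. \<one>)))"
  proof (rule sum.cong[OF refl])
    fix v assume "v \<in> Pi\<^sub>E J X"
    then show "measure haar (W \<inter> cylinder J v) = measure haar (W \<inter> cylinder J (\<lambda>_. \<one>))"
      by (intro almost_invariant_Int_cylinder_eq[OF W J]) (use X in \<open>auto simp: PiE_iff\<close>)
  qed
  finally show ?thesis by simp
qed

lemma almost_invariant_Int_prod_emb:
  assumes W: "almost_invariant W" and J: "finite J" and X: "\<And>j. j \<in> J \<Longrightarrow> X j \<subseteq> carrier G"
  shows "measure haar (W \<inter> prod_emb UNIV (\<lambda>_. factor) J (Pi\<^sub>E J X))
    = real (card (Pi\<^sub>E J X)) * measure haar W / real (card (carrier G) ^ card J)"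
proof -
  have Ws: "W \<subseteq> space haar" using W sets.sets_into_space unfolding almost_invariant_def by auto
  have "prod_emb UNIV (\<lambda>_. factor) J (Pi\<^sub>E J (\<lambda>_. carrier G)) = space haar"
    by (auto simp: prod_emb_def omega_power_haar_def space_PiM space_uniform_count_measure PiE_iff)
  then have "measure haar W = real (card (carrier G) ^ card J) * measure haar (W \<inter> cylinder J (\<lambda>_. \<one>))"
    using almost_invariant_Int_prod_emb_card[OF W J, of "\<lambda>_. carrier G"] Ws J
    by (simp add: card_PiE Int_absorb2)
  moreover have "card (carrier G) \<noteq> 0"
    using finite_carrier one_closed by auto
  moreover have "measure haar (W \<inter> prod_emb UNIV (\<lambda>_. factor) J (Pi\<^sub>E J X))
      = real (card (Pi\<^sub>E J X)) * measure haar (W \<inter> cylinder J (\<lambda>_. \<one>))"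
    using X by (rule almost_invariant_Int_prod_emb_card[OF W J])
  ultimately show ?thesis by (simp add: field_simps)
qed

lemma almost_invariant_indep:
  assumes W: "almost_invariant W" and E: "E \<in> sets haar"
  shows "measure haar (W \<inter> E) = measure haar W * measure haar E"
proof -
  interpret prob_space haar by (rule prob_space_haar)
  have Ws: "W \<in> sets haar" using W unfolding almost_invariant_def by auto
  txt \<open>Both sides are finite measures, so it suffices to compare them on cylinder sets.\<close>
  have "density haar (indicator W) = scale_measure (emeasure haar W) haar"
  proof (rule measure_eqI_PiM_infinite[where I=UNIV and M="\<lambda>_. factor"])
    show "sets (density haar (indicator W)) = sets (PiM UNIV (\<lambda>_. factor))"
      "sets (scale_measure (emeasure haar W) haar) = sets (PiM UNIV (\<lambda>_. factor))"
      by (simp_all add: omega_power_haar_def)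
    show "finite_measure (density haar (indicator W))" by (rule finite_measure_restricted[OF Ws])
  next
    fix X :: "nat \<Rightarrow> 'a set" and J :: "nat set"
    assume J: "finite J" "J \<subseteq> UNIV" and X: "\<And>j. j \<in> J \<Longrightarrow> X j \<in> sets factor"
    let ?A = "prod_emb UNIV (\<lambda>_. factor) J (Pi\<^sub>E J X)"
    have XC: "\<And>j. j \<in> J \<Longrightarrow> X j \<subseteq> carrier G" using X by (auto simp: sets_uniform_count_measure)
    have As: "?A \<in> sets haar" unfolding omega_power_haar_def using J X by (intro sets_PiM_I) auto
    have "measure haar (W \<inter> ?A) = real (card (Pi\<^sub>E J X)) * measure haar W / card (carrier G) ^ card J"
      using XC by (rule almost_invariant_Int_prod_emb[OF W J(1)])
    moreover have "measure haar (space haar \<inter> ?A)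
        = real (card (Pi\<^sub>E J X)) * measure haar (space haar) / card (carrier G) ^ card J"
      using XC by (rule almost_invariant_Int_prod_emb[OF almost_invariant_space J(1)])
    ultimately have "measure haar (W \<inter> ?A) = measure haar W * measure haar ?A"
      using prob_space sets.sets_into_space[OF As] by (simp add: Int_absorb1)
    then show "emeasure (density haar (indicator W)) ?A = emeasure (scale_measure (emeasure haar W) haar) ?A"
      using Ws As by (simp add: emeasure_restricted emeasure_eq_measure ennreal_mult)
  qed
  then have "emeasure haar (W \<inter> E) = emeasure haar W * emeasure haar E"
    using emeasure_restricted[OF Ws E] by simp
  then show ?thesis by (simp add: emeasure_eq_measure ennreal_mult[symmetric])
qed

lemma almost_invariant_zero_one:
  assumes "almost_invariant W"
  shows "measure haar W = 0 \<or> measure haar W = 1"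
proof -
  have "W \<in> sets haar" using assms unfolding almost_invariant_def by auto
  from almost_invariant_indep[OF assms this] have "measure haar W * (1 - measure haar W) = 0"
    by (simp add: algebra_simps)
  then show ?thesis by simp
qed

section \<open>Non-measurable dense subgroups\<close>

lemma translate_ultra_subgroup_iff:
  assumes U: "free_ultrafilter U" and d: "d \<in> space haar" "finite {i. d i \<noteq> \<one>}"
    and x: "x \<in> space haar"
  shows "translate d x \<in> ultra_subgroup U \<longleftrightarrow> x \<in> ultra_subgroup U"
proof -
  have "{i. translate d x i \<noteq> x i} \<subseteq> {i. d i \<noteq> \<one>}"
    using x by (auto simp: translate_def space_haar)
  then have "finite {i. translate d x i \<noteq> x i}" using d(2) by (rule finite_subset)
  moreover have "{i. x i \<noteq> translate d x i} = {i. translate d x i \<noteq> x i}" by auto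
  ultimately have "finite {i. x i \<noteq> translate d x i}" "finite {i. translate d x i \<noteq> x i}" by simp_all
  moreover have "\<forall>i. x i \<in> carrier G" "\<forall>i. translate d x i \<in> carrier G"
    using x translate_in_space[OF d(1) x] by (auto simp: space_haar)
  ultimately show ?thesis using ultra_subgroup_finite_change[OF U] by blast
qed

lemma translate_const_inv_ultra_subgroup_iff:
  assumes h: "h \<in> carrier G" and x: "x \<in> space haar"
  shows "translate (\<lambda>_. inv h) x \<in> ultra_subgroup U \<longleftrightarrow> {i. x i = h} \<in> U"
proof -
  have "(inv h \<otimes> x i = \<one>) = (x i = h)" "inv h \<otimes> x i \<in> carrier G" for i
    using x h by (auto simp: space_haar inv_solve_left')
  then show ?thesis unfolding ultra_subgroup_def translate_def by simp
qed

lemma ultra_subgroup_not_null: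
  assumes U: "free_ultrafilter U" and T: "T \<in> sets haar" "ultra_subgroup U \<subseteq> T"
  shows "measure haar T \<noteq> 0"
proof
  interpret prob_space haar by (rule prob_space_haar)
  assume T0: "measure haar T = 0"
  define R where "R h = translate (\<lambda>_. inv h) -` T \<inter> space haar" for h
  have inv_space: "(\<lambda>_. inv h) \<in> space haar" if "h \<in> carrier G" for h
    using that by (auto simp: space_haar)
  have cover: "space haar \<subseteq> (\<Union>h\<in>carrier G. R h)"
  proof
    fix x assume x: "x \<in> space haar"
    then have "(\<Union>h\<in>carrier G. {i. x i = h}) = UNIV" by (auto simp: space_haar)
    then have "(\<Union>h\<in>carrier G. {i. x i = h}) \<in> U" using free_ultrafilter_cofinite[OF U] by simp
    then obtain h where "h \<in> carrier G" "{i. x i = h} \<in> U"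
      using free_ultrafilter_finite_UN[OF U finite_carrier] by blast
    then show "x \<in> (\<Union>h\<in>carrier G. R h)"
      using translate_const_inv_ultra_subgroup_iff[OF _ x] T(2) x unfolding R_def by blast
  qed
  have R_sets: "R h \<in> sets haar" if "h \<in> carrier G" for h
    unfolding R_def by (rule translate_preimage_sets[OF inv_space[OF that] T(1)])
  then have "(\<Union>h\<in>carrier G. R h) \<in> sets haar" by (intro sets.finite_UN finite_carrier)
  with cover have "1 \<le> measure haar (\<Union>h\<in>carrier G. R h)"
    using finite_measure_mono prob_space by metis
  also have "\<dots> \<le> (\<Sum>h\<in>carrier G. measure haar (R h))"
    using R_sets by (intro finite_measure_subadditive_finite[OF finite_carrier]) blast
  also have "\<dots> = 0"
    using measure_translate_preimage[OF inv_space T(1)] T0 unfolding R_def by simp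
  finally show False by simp
qed

lemma ultra_subgroup_not_conull:
  assumes U: "free_ultrafilter U" and g: "g \<in> carrier G" "g \<noteq> \<one>"
    and S: "S \<in> sets haar" "S \<subseteq> ultra_subgroup U"
  shows "measure haar S \<noteq> 1"
proof
  interpret prob_space haar by (rule prob_space_haar)
  assume S1: "measure haar S = 1"
  have g_space: "(\<lambda>_. inv g) \<in> space haar" using g by (auto simp: space_haar)
  define Sg where "Sg = translate (\<lambda>_. inv g) -` S \<inter> space haar"
  have Sg: "Sg \<in> sets haar" "measure haar Sg = 1"
    unfolding Sg_def using translate_preimage_sets[OF g_space S(1)]
      measure_translate_preimage[OF g_space S(1)] S1 by auto
  have "S \<inter> Sg = {}"
  proof safe
    fix x assume x: "x \<in> S" "x \<in> Sg"
    have "x \<in> space haar" "translate (\<lambda>_. inv g) x \<in> ultra_subgroup U"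
      using x S(2) unfolding Sg_def by auto
    then have "{i. x i = g} \<in> U" using translate_const_inv_ultra_subgroup_iff[OF g(1)] by blast
    moreover have "{i. x i = \<one>} \<in> U" using x(1) S(2) unfolding ultra_subgroup_def by auto
    ultimately have "{i. x i = \<one>} \<inter> {i. x i = g} \<in> U" by (intro free_ultrafilter_Int[OF U])
    moreover have "{i. x i = \<one>} \<inter> {i. x i = g} = {}" using g(2) by auto
    ultimately have "{} \<in> U" by simp
    moreover have "- {} \<in> U" using free_ultrafilter_cofinite[OF U] by simp
    ultimately show "x \<in> {}" using free_ultrafilter_compl_not_mem[OF U] by blast
  qed
  then have "measure haar (S \<union> Sg) = 2" using S(1) Sg S1 by (simp add: finite_measure_Union)
  then show False using prob_le_1[of "S \<union> Sg"] by simp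
qed

lemma ultra_subgroup_not_haar_measurable:
  assumes U: "free_ultrafilter U" and g: "g \<in> carrier G" "g \<noteq> \<one>"
  shows "\<not> haar_measurable G (ultra_subgroup U)"
proof
  assume "haar_measurable G (ultra_subgroup U)"
  then obtain S N N' where SN: "ultra_subgroup U = S \<union> N" "N \<subseteq> N'" "N' \<in> null_sets haar" "S \<in> sets haar"
    unfolding haar_measurable_def by (rule sets_completionE)
  have "almost_invariant S"
    unfolding almost_invariant_def
  proof (intro conjI ballI impI)
    fix d assume d: "d \<in> space haar" "finite {i. d i \<noteq> \<one>}"
    have null: "translate d -` N' \<inter> space haar \<in> null_sets haar"
      using emeasure_translate_preimage[OF d(1)] translate_preimage_sets[OF d(1)] SN(3)
      by (auto simp: null_sets_def)
    show "AE x in haar. x \<in> S \<longleftrightarrow> translate d x \<in> S"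
      using AE_space AE_not_in[OF SN(3)] AE_not_in[OF null]
    proof eventually_elim
      case (elim x)
      then have x: "x \<in> space haar" "x \<notin> N'" "translate d x \<notin> N'" by auto
      have "x \<in> S \<longleftrightarrow> x \<in> ultra_subgroup U" "translate d x \<in> S \<longleftrightarrow> translate d x \<in> ultra_subgroup U"
        using x(2,3) SN(1,2) by auto
      then show ?case using translate_ultra_subgroup_iff[OF U d x(1)] by simp
    qed
  qed (rule SN(4))
  then have "measure haar S = 0 \<or> measure haar S = 1" by (rule almost_invariant_zero_one)
  moreover have "measure haar (S \<union> N') = measure haar S"
    using SN(3,4) by (intro measure_Un_null_set) auto
  moreover have "measure haar (S \<union> N') \<noteq> 0"
    using SN by (intro ultra_subgroup_not_null[OF U]) auto
  moreover have "measure haar S \<noteq> 1"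
    using SN(1) by (intro ultra_subgroup_not_conull[OF U g SN(4)]) auto
  ultimately show False by simp
qed

end

lemma Pow_lepoll_Pow: "A \<lesssim> B \<Longrightarrow> Pow A \<lesssim> Pow B"
  unfolding lepoll_def by (metis Pow_mono image_Pow_mono inj_on_image_Pow)

lemma carrier_omega_power_lepoll_nat_sets:
  assumes "countable (carrier \<Gamma>)"
  shows "carrier (omega_power \<Gamma>) \<lesssim> (UNIV :: nat set set)"
proof -
  let ?c = "to_nat_on (carrier \<Gamma>)"
  define code where "code x = range (\<lambda>i. prod_encode (i, ?c (x i)))" for x :: "nat \<Rightarrow> 'a"
  have "inj_on code (carrier (omega_power \<Gamma>))"
  proof (rule inj_onI)
    fix x y assume x: "x \<in> carrier (omega_power \<Gamma>)" and y: "y \<in> carrier (omega_power \<Gamma>)"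
      and eq: "code x = code y"
    show "x = y"
    proof
      fix i
      have "prod_encode (i, ?c (x i)) \<in> code y" using eq unfolding code_def by auto
      then have "?c (x i) = ?c (y i)" unfolding code_def by (auto simp: prod_encode_eq)
      moreover have "x i \<in> carrier \<Gamma>" "y i \<in> carrier \<Gamma>" using x y unfolding omega_power_def by auto
      ultimately show "x i = y i" using inj_on_to_nat_on[OF assms] by (auto dest: inj_onD)
    qed
  qed
  then show ?thesis unfolding lepoll_def by blast
qed

theorem mainTheorem1:
  fixes \<Gamma> :: "('a, 'b) monoid_scheme"
  assumes "group \<Gamma>"
    and "finite (carrier \<Gamma>)"
    and "carrier \<Gamma> \<noteq> {\<one>\<^bsub>\<Gamma>\<^esub>}"
  shows "{H. subgroup H (omega_power \<Gamma>)
             \<and> (omega_power_topology \<Gamma>) closure_of H = topspace (omega_power_topology \<Gamma>)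
             \<and> \<not> haar_measurable \<Gamma> H}
         \<approx> (UNIV :: real set set)"
    (is "?S \<approx> _")
proof (rule lepoll_antisym)
  interpret finite_group \<Gamma>
    using assms(1,2) by (simp add: finite_group_def finite_group_axioms_def)
  obtain g where g: "g \<in> carrier \<Gamma>" "g \<noteq> \<one>\<^bsub>\<Gamma>\<^esub>" using assms(3) one_closed by blast
  have "carrier (omega_power \<Gamma>) \<lesssim> (UNIV :: real set)"
    using carrier_omega_power_lepoll_nat_sets[OF countable_finite[OF assms(2)]] nat_sets_eqpoll_reals
    by (rule lepoll_trans2)
  then have "Pow (carrier (omega_power \<Gamma>)) \<lesssim> Pow (UNIV :: real set)" by (rule Pow_lepoll_Pow)
  moreover have "?S \<subseteq> Pow (carrier (omega_power \<Gamma>))" using subgroup.subset by blast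
  ultimately show "?S \<lesssim> (UNIV :: real set set)"
    using lepoll_trans[OF subset_imp_lepoll] by simp
  have "(UNIV :: real set) \<lesssim> (UNIV :: nat set set)"
    using eqpoll_sym[OF nat_sets_eqpoll_reals] by (rule eqpoll_imp_lepoll)
  then have "(UNIV :: real set set) \<lesssim> Pow (UNIV :: nat set set)"
    using Pow_lepoll_Pow by fastforce
  also have "\<dots> \<lesssim> {U :: nat set set. free_ultrafilter U}" by (rule Pow_nat_sets_lepoll_free_ultrafilters)
  also have "\<dots> \<lesssim> ?S"
    unfolding lepoll_def
  proof (intro exI conjI)
    show "inj_on ultra_subgroup {U :: nat set set. free_ultrafilter U}"
      using ultra_subgroup_inj[OF _ g] by (meson inj_onI)
    show "ultra_subgroup ` {U :: nat set set. free_ultrafilter U} \<subseteq> ?S"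
      using ultra_subgroup_subgroup ultra_subgroup_dense ultra_subgroup_not_haar_measurable[OF _ g]
      by blast
  qed
  finally show "(UNIV :: real set set) \<lesssim> ?S" .
qed

end
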